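(* Let $n\ge1$ and $1\le m\le n$. Suppose $A=(a_{ij})$ is an $n\times n$ $(m,\epsilon_A)$-matrix and set $K_A=\max_{i,j\le n,\,k\le m} a_{ij}/a_{kk}$. If $A'$ is an $n\times n$ $(m,\epsilon_{A'})$-matrix, then $AA'$ is an $(m,\epsilon_{AA'})$-matrix with $\epsilon_{AA'}=\epsilon_A+nK_A\epsilon_{A'}$.
   Context: For $\epsilon>0$ and $1\le m\le n$, an $n\times n$ nonnegative matrix $A=(a_{ij})$ with positive diagonal entries is an $(m,\epsilon)$-matrix if $a_{ij}/a_{jj}<\epsilon$ for all $j\le m$ and $i\neq j$. *)

theory Defs
  imports Main "HOL.Real"
begin

text \<open>n x n real matrices are represented as functions nat => nat => real,
  with row/column indices ranging over {1..n} (1-based, as in the paper).\<close>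

definition mat_mult :: "nat \<Rightarrow> (nat \<Rightarrow> nat \<Rightarrow> real) \<Rightarrow> (nat \<Rightarrow> nat \<Rightarrow> real) \<Rightarrow> (nat \<Rightarrow> nat \<Rightarrow> real)" where
  "mat_mult n A B = (\<lambda>i j. \<Sum>k\<in>{1..n}. A i k * B k j)"

definition is_m_eps_matrix :: "nat \<Rightarrow> nat \<Rightarrow> real \<Rightarrow> (nat \<Rightarrow> nat \<Rightarrow> real) \<Rightarrow> bool" where
  "is_m_eps_matrix n m eps A \<longleftrightarrow>
     0 < eps \<and> 1 \<le> m \<and> m \<le> n \<and>
     (\<forall>i\<in>{1..n}. \<forall>j\<in>{1..n}. 0 \<le> A i j) \<and>
     (\<forall>i\<in>{1..n}. 0 < A i i) \<and>
     (\<forall>j\<in>{1..m}. \<forall>i\<in>{1..n}. i \<noteq> j \<longrightarrow> A i j / A j j < eps)"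

definition K_const :: "nat \<Rightarrow> nat \<Rightarrow> (nat \<Rightarrow> nat \<Rightarrow> real) \<Rightarrow> real" where
  "K_const n m A = Max {A i j / A k k | i j k. i \<in> {1..n} \<and> j \<in> {1..n} \<and> k \<in> {1..m}}"

end

theory Submission
  imports Defs
begin

text \<open>Divide the \<open>(i, j)\<close> entry of \<open>A A'\<close> by the smaller quantity \<open>a\<^sub>j\<^sub>j a'\<^sub>j\<^sub>j\<close>.
  The term \<open>k = j\<close> contributes \<open>a\<^sub>i\<^sub>j / a\<^sub>j\<^sub>j < \<epsilon>\<^sub>A\<close>, and each of the other
  \<open>n - 1\<close> terms is \<open>(a\<^sub>i\<^sub>k / a\<^sub>j\<^sub>j) (a'\<^sub>k\<^sub>j / a'\<^sub>j\<^sub>j) \<le> K\<^sub>A \<epsilon>\<^sub>A\<^sub>'\<close>.\<close>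

lemma K_const_ge:
  assumes "i \<in> {1..n}" "j \<in> {1..n}" "k \<in> {1..m}"
  shows "A i j / A k k \<le> K_const n m A"
proof -
  have entries: "{A i j / A k k | i j k. i \<in> {1..n} \<and> j \<in> {1..n} \<and> k \<in> {1..m}}
      = (\<lambda>(i, j, k). A i j / A k k) ` ({1..n} \<times> {1..n} \<times> {1..m})"
    by (fastforce simp: image_iff)
  show ?thesis
    unfolding K_const_def entries
    by (rule Max_ge) (use assms in \<open>auto intro!: image_eqI[where x = "(i, j, k)"]\<close>)
qed

lemma K_const_ge_1:
  assumes "1 \<le> m" "m \<le> n" "\<forall>i\<in>{1..n}. 0 < A i i"
  shows "1 \<le> K_const n m A"
  using K_const_ge[of 1 n 1 1 m A] assms by force

lemma mat_mult_nonneg: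
  assumes "\<forall>i\<in>{1..n}. \<forall>j\<in>{1..n}. 0 \<le> A i j" "\<forall>i\<in>{1..n}. \<forall>j\<in>{1..n}. 0 \<le> B i j"
  shows "\<forall>i\<in>{1..n}. \<forall>j\<in>{1..n}. 0 \<le> mat_mult n A B i j"
  using assms unfolding mat_mult_def by (auto intro!: sum_nonneg)

lemma mat_mult_split_diag:
  assumes "j \<in> {1..n}"
  shows "mat_mult n A B i j = A i j * B j j + (\<Sum>k\<in>{1..n} - {j}. A i k * B k j)"
  unfolding mat_mult_def using assms by (simp add: sum.remove)

lemma mat_mult_diag_ge:
  assumes "\<forall>i\<in>{1..n}. \<forall>j\<in>{1..n}. 0 \<le> A i j" "\<forall>i\<in>{1..n}. \<forall>j\<in>{1..n}. 0 \<le> B i j"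
    and "j \<in> {1..n}"
  shows "A j j * B j j \<le> mat_mult n A B j j"
  using assms by (auto simp: mat_mult_split_diag intro!: sum_nonneg)

lemma offdiag_sum_le:
  assumes A: "is_m_eps_matrix n m epsA A" and B: "is_m_eps_matrix n m epsB B"
    and j: "j \<in> {1..m}" and i: "i \<in> {1..n}"
  shows "(\<Sum>k\<in>{1..n} - {j}. A i k * B k j) / (A j j * B j j) \<le> real n * K_const n m A * epsB"
proof -
  let ?K = "K_const n m A"
  note A_props = A[unfolded is_m_eps_matrix_def] and B_props = B[unfolded is_m_eps_matrix_def]
  have jn: "j \<in> {1..n}" using j A_props by auto
  have K: "1 \<le> ?K" using A_props by (intro K_const_ge_1) auto
  have term_le: "A i k * B k j / (A j j * B j j) \<le> ?K * epsB" if k: "k \<in> {1..n} - {j}" for k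
  proof -
    have "A i k * B k j / (A j j * B j j) = (A i k / A j j) * (B k j / B j j)"
      by simp
    also have "\<dots> \<le> ?K * epsB"
    proof (rule mult_mono)
      show "A i k / A j j \<le> ?K" using i k j by (intro K_const_ge) auto
      show "B k j / B j j \<le> epsB" using B_props j k by (auto intro: less_imp_le)
    qed (use K B_props k jn in auto)
    finally show ?thesis .
  qed
  have "(\<Sum>k\<in>{1..n} - {j}. A i k * B k j) / (A j j * B j j)
      = (\<Sum>k\<in>{1..n} - {j}. A i k * B k j / (A j j * B j j))"
    by (simp add: sum_divide_distrib)
  also have "\<dots> \<le> (\<Sum>k\<in>{1..n} - {j}. ?K * epsB)"
    by (rule sum_mono) (rule term_le)
  also have "\<dots> = real (n - 1) * (?K * epsB)"
    using jn by simp
  also have "\<dots> \<le> real n * ?K * epsB"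
    using K B_props by (simp add: mult_right_mono)
  finally show ?thesis .
qed

lemma mat_mult_offdiag_ratio_less:
  assumes A: "is_m_eps_matrix n m epsA A" and B: "is_m_eps_matrix n m epsB B"
    and j: "j \<in> {1..m}" and i: "i \<in> {1..n}" "i \<noteq> j"
  shows "mat_mult n A B i j / mat_mult n A B j j < epsA + real n * K_const n m A * epsB"
proof -
  note A_props = A[unfolded is_m_eps_matrix_def] and B_props = B[unfolded is_m_eps_matrix_def]
  have jn: "j \<in> {1..n}" using j A_props by auto
  have Bjj: "0 < B j j" using B_props jn by auto
  define P where "P = A j j * B j j"
  have P: "0 < P" using A_props Bjj jn by (simp add: P_def)
  have P_le: "P \<le> mat_mult n A B j j"
    unfolding P_def using A_props B_props jn by (intro mat_mult_diag_ge) auto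
  have "0 \<le> mat_mult n A B i j"
    using mat_mult_nonneg[of n A B] A_props B_props i jn by auto
  then have "mat_mult n A B i j / mat_mult n A B j j \<le> mat_mult n A B i j / P"
    by (rule divide_left_mono[OF P_le]) (use P P_le in auto)
  also have "\<dots> = A i j / A j j + (\<Sum>k\<in>{1..n} - {j}. A i k * B k j) / P"
    using jn Bjj by (simp add: P_def mat_mult_split_diag add_divide_distrib)
  also have "\<dots> < epsA + real n * K_const n m A * epsB"
    using A_props j i offdiag_sum_le[OF A B j i(1)] by (intro add_less_le_mono) (auto simp: P_def)
  finally show ?thesis .
qed

theorem lemma2p2:
  fixes n m :: nat and epsA epsA' :: real and A A' :: "nat \<Rightarrow> nat \<Rightarrow> real"
  assumes "1 \<le> n" and "1 \<le> m" and "m \<le> n"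
    and "is_m_eps_matrix n m epsA A"
    and "is_m_eps_matrix n m epsA' A'"
  shows "is_m_eps_matrix n m (epsA + real n * K_const n m A * epsA') (mat_mult n A A')"
proof -
  note A = assms(4)[unfolded is_m_eps_matrix_def]
  note A' = assms(5)[unfolded is_m_eps_matrix_def]
  have "1 \<le> K_const n m A" using A by (intro K_const_ge_1) auto
  then have eps_pos: "0 < epsA + real n * K_const n m A * epsA'"
    using A A' by (simp add: add_pos_nonneg)
  have diag_pos: "0 < mat_mult n A A' i i" if "i \<in> {1..n}" for i
  proof -
    have "0 < A i i * A' i i" using A A' that by simp
    also have "\<dots> \<le> mat_mult n A A' i i" using A A' that by (intro mat_mult_diag_ge) auto
    finally show ?thesis .
  qed
  show ?thesis
    unfolding is_m_eps_matrix_def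
    using eps_pos diag_pos A mat_mult_nonneg[of n A A'] A'
      mat_mult_offdiag_ratio_less[OF assms(4,5)] by auto
qed

end
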